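(* Let $X$ be a compact metric space of negative type. A probability measure $\mu\in\mathscr{P}(X)$ is diversity-maximizing if and only if there is a constant $C>0$ such that $Z\mu(x)=C$ for all $x\in\operatorname{supp}\mu$ and $Z\mu(x)\ge C$ for all $x\in X$. In that case $C=1/|X|_+$.
   Context: Let $(X,d)$ be a compact metric space, $Z(x,y)=e^{-d(x,y)}$, $\mathscr{P}(X)$ the Borel probability measures on $X$, $Z\mu(x)=\int_X Z(x,y)\,\mu(dy)$, $\langle\mu,\nu\rangle_{\mathscr{W}}=\int_X Z\mu\,d\nu$. Maximum diversity: $|X|_+=\sup_{\mu\in\mathscr{P}(X)}1/\langle\mu,\mu\rangle_{\mathscr{W}}$; a diversity-maximizing measure is a $\mu\in\mathscr{P}(X)$ attaining this supremum. $X$ is of negative type if $(X,\sqrt d)$ embeds isometrically into a Hilbert space. $\operatorname{supp}\mu$ denotes the (closed) support of $\mu$. *)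

theory Defs
  imports "HOL-Probability.Probability"
begin

definition borel_prob_measures :: "'a::metric_space set \<Rightarrow> 'a measure set" where
  "borel_prob_measures X = {M. sets M = sets (restrict_space borel X) \<and> prob_space M}"

definition Zmu :: "'a::metric_space measure \<Rightarrow> 'a \<Rightarrow> real" where
  "Zmu M x = (\<integral>y. exp (- dist x y) \<partial>M)"

definition W_inner :: "'a::metric_space measure \<Rightarrow> 'a measure \<Rightarrow> real" where
  "W_inner M N = (\<integral>x. Zmu M x \<partial>N)"

definition max_diversity :: "'a::metric_space set \<Rightarrow> real" where
  "max_diversity X = (SUP M \<in> borel_prob_measures X. 1 / W_inner M M)"

definition diversity_maximizing :: "'a::metric_space set \<Rightarrow> 'a measure \<Rightarrow> bool" where
  "diversity_maximizing X M \<longleftrightarrow>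
     M \<in> borel_prob_measures X \<and> 1 / W_inner M M = max_diversity X"

definition msupp :: "'a::topological_space measure \<Rightarrow> 'a set" where
  "msupp M = {x \<in> space M. \<forall>U. open U \<and> x \<in> U \<longrightarrow> emeasure M (U \<inter> space M) > 0}"

definition sqrt_isometric_embedding ::
    "'a::metric_space set \<Rightarrow> ('a \<Rightarrow> 'b::{real_inner,complete_space}) \<Rightarrow> bool" where
  "sqrt_isometric_embedding X f \<longleftrightarrow> (\<forall>x\<in>X. \<forall>y\<in>X. dist (f x) (f y) = sqrt (dist x y))"

end

theory Submission
  imports Defs
begin

(* Negative type makes exp(-d) a positive definite kernel: through the embedding f,
   exp(-d(x,y)) = exp(-|f x - f y|^2) is a Gaussian kernel, which is positive definite by
   the Schur product theorem and the exponential series. Discretising measures along fine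
   partitions of the compact space X turns this into 2 <mu,nu> <= <mu,mu> + <nu,nu>.
   If Z mu >= C on X with equality on supp mu, then <mu,mu> = C <= <mu,nu>, hence
   <nu,nu> >= C for every nu. Conversely, at a maximiser mu, moving a little mass to a
   point p would lower <mu,mu> unless Z mu(p) >= <mu,mu>; as Z mu integrates to <mu,mu>
   against mu, continuity then forces equality on the support. *)

definition pos_semidef :: "nat \<Rightarrow> (nat \<Rightarrow> nat \<Rightarrow> real) \<Rightarrow> bool" where
  "pos_semidef m A \<longleftrightarrow> (\<forall>c. 0 \<le> (\<Sum>i<m. \<Sum>j<m. c i * c j * A i j))"

lemma pos_semidef_add:
  "pos_semidef m A \<Longrightarrow> pos_semidef m B \<Longrightarrow> pos_semidef m (\<lambda>i j. A i j + B i j)"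
  unfolding pos_semidef_def by (simp add: distrib_left sum.distrib add_nonneg_nonneg)

lemma pos_semidef_scale:
  assumes "pos_semidef m A"
  shows "pos_semidef m (\<lambda>i j. a i * a j * A i j)"
  unfolding pos_semidef_def
proof
  fix c :: "nat \<Rightarrow> real"
  have "0 \<le> (\<Sum>i<m. \<Sum>j<m. (c i * a i) * (c j * a j) * A i j)"
    using assms unfolding pos_semidef_def by (rule allE)
  then show "0 \<le> (\<Sum>i<m. \<Sum>j<m. c i * c j * (a i * a j * A i j))"
    by (simp add: mult_ac)
qed

lemma pos_semidef_mult_inner:
  fixes v :: "nat \<Rightarrow> 'b::real_inner"
  assumes A: "pos_semidef m A"
  shows "pos_semidef m (\<lambda>i j. A i j * (v i \<bullet> v j))"
proof -
  have "pos_semidef m (\<lambda>i j. A i j * (v i \<bullet> v j))"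
    if "card {i. i < m \<and> v i \<noteq> 0} = n" for n and v :: "nat \<Rightarrow> 'b"
    using that
  proof (induction n arbitrary: v rule: less_induct)
    case (less n)
    show ?case
    proof (cases "\<exists>k<m. v k \<noteq> 0")
      case False
      then show ?thesis
        by (simp add: pos_semidef_def)
    next
      case True
      then obtain k where k: "k < m" "v k \<noteq> 0"
        by blast
      text \<open>Splitting off the components along the unit vector \<open>q\<close> in direction \<open>v k\<close>
        leaves a rank-one part and a Gram matrix of vectors with fewer nonzero entries.\<close>
      define q where "q = v k /\<^sub>R norm (v k)"
      define a where "a i = v i \<bullet> q" for i
      define r where "r i = v i - a i *\<^sub>R q" for i
      have qq: "q \<bullet> q = 1"
        using k by (simp add: q_def dot_square_norm power2_eq_square)
      have rq: "r i \<bullet> q = 0" for i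
        by (simp add: r_def a_def inner_diff_left qq)
      have v_split: "v i \<bullet> v j = a i * a j + r i \<bullet> r j" for i j
      proof -
        have "v i \<bullet> v j = (a i *\<^sub>R q + r i) \<bullet> (a j *\<^sub>R q + r j)"
          by (simp add: r_def)
        also have "\<dots> = a i * a j * (q \<bullet> q) + a i * (q \<bullet> r j) + a j * (r i \<bullet> q) + r i \<bullet> r j"
          by (simp add: algebra_simps)
        finally show ?thesis
          using qq rq[of i] rq[of j] by (simp add: inner_commute)
      qed
      have "a k = norm (v k)"
        using k by (simp add: a_def q_def dot_square_norm power2_eq_square)
      then have "r k = 0"
        using k by (simp add: r_def q_def)
      moreover have "v i = 0 \<Longrightarrow> r i = 0" for i
        by (simp add: r_def a_def)
      ultimately have "{i. i < m \<and> r i \<noteq> 0} \<subset> {i. i < m \<and> v i \<noteq> 0}"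
        using k by auto
      moreover have "finite {i. i < m \<and> v i \<noteq> 0}"
        by simp
      ultimately have "card {i. i < m \<and> r i \<noteq> 0} < n"
        using less.prems psubset_card_mono by blast
      then have "pos_semidef m (\<lambda>i j. A i j * (r i \<bullet> r j))"
        using less.IH by blast
      then have "pos_semidef m (\<lambda>i j. a i * a j * A i j + A i j * (r i \<bullet> r j))"
        by (rule pos_semidef_add[OF pos_semidef_scale[OF A]])
      then show ?thesis
        by (simp add: v_split distrib_left mult_ac)
    qed
  qed
  then show ?thesis
    by blast
qed

lemma pos_semidef_inner_power:
  fixes v :: "nat \<Rightarrow> 'b::real_inner"
  shows "pos_semidef m (\<lambda>i j. (v i \<bullet> v j) ^ n)"
proof (induction n)
  case 0
  have "(\<Sum>i<m. \<Sum>j<m. c i * c j) = (\<Sum>i<m. c i)\<^sup>2" for c :: "nat \<Rightarrow> real"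
    by (simp add: power2_eq_square sum_product)
  then show ?case
    by (simp add: pos_semidef_def)
next
  case (Suc n)
  then show ?case
    using pos_semidef_mult_inner[OF Suc, of v] by (simp add: mult.commute)
qed

lemma pos_semidef_exp_inner:
  fixes v :: "nat \<Rightarrow> 'b::real_inner"
  shows "pos_semidef m (\<lambda>i j. exp (v i \<bullet> v j))"
  unfolding pos_semidef_def
proof
  fix c :: "nat \<Rightarrow> real"
  define Q where "Q n = (\<Sum>i<m. \<Sum>j<m. c i * c j * (v i \<bullet> v j) ^ n)" for n
  have "(\<lambda>n. \<Sum>i<m. \<Sum>j<m. c i * c j * ((v i \<bullet> v j) ^ n /\<^sub>R fact n))
      sums (\<Sum>i<m. \<Sum>j<m. c i * c j * exp (v i \<bullet> v j))"
    by (intro sums_sum sums_mult exp_converges)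
  moreover have "(\<Sum>i<m. \<Sum>j<m. c i * c j * ((v i \<bullet> v j) ^ n /\<^sub>R fact n)) = Q n / fact n" for n
    unfolding Q_def sum_divide_distrib by (intro sum.cong refl) (simp add: divide_inverse mult_ac)
  moreover have "0 \<le> Q n / fact n" for n
    using pos_semidef_inner_power[of m v n] by (simp add: Q_def pos_semidef_def)
  ultimately show "0 \<le> (\<Sum>i<m. \<Sum>j<m. c i * c j * exp (v i \<bullet> v j))"
    by (metis (no_types, lifting) sums_le sums_zero)
qed

lemma pos_semidef_gaussian:
  fixes v :: "nat \<Rightarrow> 'b::real_inner"
  shows "pos_semidef m (\<lambda>i j. exp (- (norm (v i - v j))\<^sup>2))"
  unfolding pos_semidef_def
proof
  fix c :: "nat \<Rightarrow> real"
  define d where "d i = c i * exp (- (v i \<bullet> v i))" for i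
  define w where "w i = sqrt 2 *\<^sub>R v i" for i
  have "c i * c j * exp (- (norm (v i - v j))\<^sup>2) = d i * d j * exp (w i \<bullet> w j)" for i j
  proof -
    have "- (norm (v i - v j))\<^sup>2 = - (v i \<bullet> v i) + - (v j \<bullet> v j) + w i \<bullet> w j"
      by (simp add: w_def power2_norm_eq_inner inner_diff_left inner_diff_right inner_commute)
    then have "exp (- (norm (v i - v j))\<^sup>2)
        = exp (- (v i \<bullet> v i)) * exp (- (v j \<bullet> v j)) * exp (w i \<bullet> w j)"
      by (simp only: exp_add)
    then show ?thesis
      by (simp add: d_def mult_ac)
  qed
  then show "0 \<le> (\<Sum>i<m. \<Sum>j<m. c i * c j * exp (- (norm (v i - v j))\<^sup>2))"
    using pos_semidef_exp_inner[of m w] by (simp add: pos_semidef_def)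
qed

lemma borel_prob_measuresD:
  assumes "M \<in> borel_prob_measures X"
  shows "prob_space M" "sets M = sets (restrict_space borel X)" "space M = X"
proof -
  show "prob_space M" "sets M = sets (restrict_space borel X)"
    using assms by (auto simp: borel_prob_measures_def)
  then show "space M = X"
    by (metis sets_eq_imp_space_eq space_restrict_space space_borel Int_UNIV_right)
qed

lemma borel_prob_measures_measurable:
  assumes "M \<in> borel_prob_measures X" "continuous_on X g"
  shows "g \<in> borel_measurable M"
  using borel_measurable_continuous_on_restrict[OF assms(2)]
  by (simp add: measurable_cong_sets[OF borel_prob_measuresD(2)[OF assms(1)] refl])

lemma borel_prob_measures_integrable:
  fixes g :: "'a::metric_space \<Rightarrow> 'b::{banach,second_countable_topology}"
  assumes "M \<in> borel_prob_measures X" "continuous_on X g" "\<And>y. y \<in> X \<Longrightarrow> norm (g y) \<le> B"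
  shows "integrable M g"
proof -
  interpret prob_space M
    using borel_prob_measuresD(1)[OF assms(1)] .
  show ?thesis
    using assms borel_prob_measures_measurable[OF assms(1,2)]
    by (intro integrable_const_bound[where B=B]) (auto simp: borel_prob_measuresD(3)[OF assms(1)])
qed

lemma exp_minus_diff_le:
  fixes a b :: real
  assumes "0 \<le> a" "a \<le> b"
  shows "exp (- a) - exp (- b) \<le> b - a"
proof -
  have "exp (- a) - exp (- b) = exp (- a) * (1 - exp (a - b))"
    by (simp add: algebra_simps flip: exp_add)
  also have "\<dots> \<le> 1 - exp (a - b)"
    using assms by (intro mult_left_le_one_le) auto
  also have "\<dots> \<le> b - a"
    using exp_ge_add_one_self[of "a - b"] by linarith
  finally show ?thesis .
qed

lemma abs_exp_minus_diff_le:
  fixes a b :: real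
  assumes "0 \<le> a" "0 \<le> b"
  shows "\<bar>exp (- a) - exp (- b)\<bar> \<le> \<bar>a - b\<bar>"
  using exp_minus_diff_le[of a b] exp_minus_diff_le[of b a] assms
  by (cases "a \<le> b") auto

lemma abs_exp_minus_dist_diff_le: "\<bar>exp (- dist x y) - exp (- dist x' y)\<bar> \<le> dist x x'"
  using abs_exp_minus_diff_le[of "dist x y" "dist x' y"] dist_triangle3[of x y x'] dist_triangle3[of x' y x]
  by (simp add: dist_commute)

lemma integrable_exp_minus_dist:
  "M \<in> borel_prob_measures X \<Longrightarrow> integrable M (\<lambda>y. exp (- dist x y))"
  by (rule borel_prob_measures_integrable[where B=1])
     (auto simp: continuous_on_exp continuous_on_minus continuous_on_dist)

lemma Zmu_lipschitz:
  assumes M: "M \<in> borel_prob_measures X"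
  shows "\<bar>Zmu M x - Zmu M x'\<bar> \<le> dist x x'"
proof -
  interpret prob_space M
    using borel_prob_measuresD(1)[OF M] .
  have "Zmu M x - Zmu M x' = (\<integral>y. exp (- dist x y) - exp (- dist x' y) \<partial>M)"
    unfolding Zmu_def using integrable_exp_minus_dist[OF M] by simp
  also have "\<bar>\<dots>\<bar> \<le> (\<integral>y. \<bar>exp (- dist x y) - exp (- dist x' y)\<bar> \<partial>M)"
    by (rule integral_abs_bound)
  also have "\<dots> \<le> dist x x'"
    using integrable_exp_minus_dist[OF M] abs_exp_minus_dist_diff_le
    by (intro integral_le_const AE_I2) auto
  finally show ?thesis .
qed

lemma continuous_on_Zmu:
  assumes "M \<in> borel_prob_measures X"
  shows "continuous_on A (Zmu M)"
proof -
  have "lipschitz_on 1 A (Zmu M)"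
    using Zmu_lipschitz[OF assms] by (intro lipschitz_onI) (auto simp: dist_real_def)
  then show ?thesis
    by (rule lipschitz_on_continuous_on)
qed

lemma
  assumes "M \<in> borel_prob_measures X"
  shows Zmu_nonneg: "0 \<le> Zmu M x" and Zmu_le_one: "Zmu M x \<le> 1"
proof -
  interpret prob_space M
    using borel_prob_measuresD(1)[OF assms] .
  show "0 \<le> Zmu M x" "Zmu M x \<le> 1"
    unfolding Zmu_def using integrable_exp_minus_dist[OF assms]
    by (auto intro!: integral_ge_const integral_le_const)
qed

lemma exp_diameter_le_Zmu:
  assumes "M \<in> borel_prob_measures X" "\<And>y. y \<in> X \<Longrightarrow> dist x y \<le> D"
  shows "exp (- D) \<le> Zmu M x"
proof -
  interpret prob_space M
    using borel_prob_measuresD(1)[OF assms(1)] .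
  show ?thesis
    unfolding Zmu_def using integrable_exp_minus_dist[OF assms(1)] assms(2)
    by (intro integral_ge_const) (auto simp: borel_prob_measuresD(3)[OF assms(1)])
qed

lemma integrable_Zmu:
  assumes "M \<in> borel_prob_measures X" "N \<in> borel_prob_measures X"
  shows "integrable N (Zmu M)"
  using Zmu_nonneg[OF assms(1)] Zmu_le_one[OF assms(1)]
  by (intro borel_prob_measures_integrable[OF assms(2) continuous_on_Zmu[OF assms(1)], where B=1]) auto

lemma exp_diameter_le_W_inner:
  assumes "M \<in> borel_prob_measures X" "N \<in> borel_prob_measures X"
    and "\<And>x y. x \<in> X \<Longrightarrow> y \<in> X \<Longrightarrow> dist x y \<le> D"
  shows "exp (- D) \<le> W_inner M N"
proof -
  interpret prob_space N
    using borel_prob_measuresD(1)[OF assms(2)] .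
  show ?thesis
    unfolding W_inner_def using integrable_Zmu[OF assms(1,2)] assms(3) exp_diameter_le_Zmu[OF assms(1)]
    by (auto intro!: integral_ge_const simp: borel_prob_measuresD(3)[OF assms(2)])
qed

lemma W_inner_le_one:
  assumes "M \<in> borel_prob_measures X" "N \<in> borel_prob_measures X"
  shows "W_inner M N \<le> 1"
proof -
  interpret prob_space N
    using borel_prob_measuresD(1)[OF assms(2)] .
  show ?thesis
    unfolding W_inner_def using integrable_Zmu[OF assms(1,2)] Zmu_le_one[OF assms(1)]
    by (auto intro!: integral_le_const)
qed

definition fine_partition ::
    "'a::metric_space set \<Rightarrow> real \<Rightarrow> nat \<Rightarrow> (nat \<Rightarrow> 'a) \<Rightarrow> (nat \<Rightarrow> 'a set) \<Rightarrow> bool" where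
  "fine_partition X d m p A \<longleftrightarrow>
     (\<forall>i<m. p i \<in> X \<and> A i \<in> sets (restrict_space borel X) \<and> (\<forall>y\<in>A i. dist y (p i) < d))
     \<and> (\<forall>y\<in>X. (\<Sum>i<m. indicator (A i) y) = (1::real))"

lemma fine_partition_exists:
  fixes X :: "'a::metric_space set"
  assumes "compact X" "0 < d"
  obtains m p A where "fine_partition X d m p A"
proof -
  obtain F where F: "F \<subseteq> X" "finite F" "X \<subseteq> (\<Union>c\<in>F. ball c d)"
    using compactE_image[OF assms(1), of X "\<lambda>c. ball c d"] assms(2) by force
  then obtain m :: nat and p where F_eq: "F = p ` {..<m}"
    by (metis finite_conv_nat_seg_image lessThan_def)
  define A where "A i = X \<inter> (ball (p i) d - (\<Union>j<i. ball (p j) d))" for i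
  have "A i \<in> sets (restrict_space borel X)" for i
    unfolding sets_restrict_space A_def by (intro imageI sets.Diff borel_open open_UN) auto
  moreover have "(\<Sum>i<m. indicator (A i) y) = (1::real)" if y: "y \<in> X" for y
  proof -
    obtain j where j: "j < m" "y \<in> ball (p j) d"
      using F F_eq y by auto
    define k where "k = (LEAST i. y \<in> ball (p i) d)"
    have k: "y \<in> ball (p k) d" "k \<le> j"
      unfolding k_def using j(2) by (auto intro: LeastI Least_le)
    have "i < k \<Longrightarrow> y \<notin> ball (p i) d" for i
      unfolding k_def by (rule not_less_Least)
    then have "y \<in> A i \<longleftrightarrow> i = k" for i
      using y k(1) by (auto simp: A_def) (meson lessThan_iff linorder_neqE_nat)
    then have "(\<Sum>i<m. indicator (A i) y) = (\<Sum>i<m. if i = k then 1 else (0::real))"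
      by (intro sum.cong) (auto simp: indicator_def)
    also have "\<dots> = 1"
      using k j by simp
    finally show ?thesis .
  qed
  ultimately have "fine_partition X d m p A"
    using F F_eq by (auto simp: fine_partition_def A_def dist_commute)
  then show ?thesis ..
qed

lemma integral_fine_partition_approx:
  fixes g :: "'a::metric_space \<Rightarrow> real"
  assumes M: "M \<in> borel_prob_measures X" and P: "fine_partition X d m p A"
    and g: "integrable M g"
    and L: "0 \<le> L" "\<And>x y. x \<in> X \<Longrightarrow> y \<in> X \<Longrightarrow> \<bar>g x - g y\<bar> \<le> L * dist x y"
  shows "\<bar>integral\<^sup>L M g - (\<Sum>j<m. g (p j) * measure M (A j))\<bar> \<le> L * d"
proof -
  interpret prob_space M
    using borel_prob_measuresD(1)[OF M] .
  note space_M = borel_prob_measuresD(3)[OF M]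
  have A: "A j \<in> sets M" "A j \<subseteq> X" if "j < m" for j
    using P that sets.sets_into_space[of "A j" "restrict_space borel X"]
    by (auto simp: fine_partition_def borel_prob_measuresD(2)[OF M] space_restrict_space)
  define h where "h y = (\<Sum>j<m. g (p j) * indicator (A j) y)" for y
  have h: "integrable M h"
    unfolding h_def using A
    by (intro Bochner_Integration.integrable_sum integrable_mult_right integrable_real_indicator)
       (auto simp: emeasure_eq_measure)
  have "integral\<^sup>L M h = (\<Sum>j<m. g (p j) * measure M (A j))"
    unfolding h_def using A space_M
    by (subst Bochner_Integration.integral_sum)
       (auto intro!: sum.cong simp: Int_absorb2 emeasure_eq_measure)
  moreover have "\<bar>g y - h y\<bar> \<le> L * d" if y: "y \<in> X" for y
  proof -
    have one: "(\<Sum>j<m. indicator (A j) y) = (1::real)"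
      using P y by (simp add: fine_partition_def)
    have "g y - h y = (\<Sum>j<m. indicator (A j) y) * g y - h y"
      unfolding one by simp
    also have "\<dots> = (\<Sum>j<m. indicator (A j) y * (g y - g (p j)))"
      by (simp add: h_def sum_distrib_left sum_distrib_right sum_subtractf algebra_simps
          del: sum_mult_indicator)
    also have "\<bar>\<dots>\<bar> \<le> (\<Sum>j<m. indicator (A j) y * (L * d))"
    proof (intro order.trans[OF sum_abs] sum_mono)
      fix j assume "j \<in> {..<m}"
      then have "\<bar>g y - g (p j)\<bar> \<le> L * d" if "y \<in> A j"
        using P L y that order.trans[OF L(2) mult_left_mono[OF less_imp_le L(1)]]
        by (auto simp: fine_partition_def)
      then show "\<bar>indicator (A j) y * (g y - g (p j))\<bar> \<le> indicator (A j) y * (L * d)"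
        by (auto simp: indicator_def)
    qed
    also have "\<dots> = L * d"
      unfolding sum_distrib_right[symmetric] one by simp
    finally show ?thesis .
  qed
  then have "\<bar>integral\<^sup>L M (\<lambda>y. g y - h y)\<bar> \<le> L * d"
    using g h space_M
    by (intro order.trans[OF integral_abs_bound] integral_le_const AE_I2) auto
  ultimately show ?thesis
    using g h by simp
qed

lemma sum_measure_fine_partition:
  assumes "M \<in> borel_prob_measures X" "fine_partition X d m p A"
  shows "(\<Sum>j<m. measure M (A j)) = 1"
proof -
  interpret prob_space M
    using borel_prob_measuresD(1)[OF assms(1)] .
  show ?thesis
    using integral_fine_partition_approx[OF assms, where g="\<lambda>_. 1" and L=0] by (simp add: prob_space)
qed

lemma W_inner_fine_partition_approx:
  assumes M: "M \<in> borel_prob_measures X" and N: "N \<in> borel_prob_measures X"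
    and P: "fine_partition X d m p A"
  shows "\<bar>W_inner M N - (\<Sum>i<m. \<Sum>j<m. exp (- dist (p i) (p j)) * measure M (A j) * measure N (A i))\<bar>
    \<le> 2 * d"
proof -
  define h where "h x = (\<Sum>j<m. exp (- dist x (p j)) * measure M (A j))" for x
  have Zmu_h: "\<bar>Zmu M x - h x\<bar> \<le> d" for x
  proof -
    have "\<bar>exp (- dist x y) - exp (- dist x y')\<bar> \<le> 1 * dist y y'" for y y'
      using abs_exp_minus_dist_diff_le[of y x y'] by (simp add: dist_commute)
    then show ?thesis
      using integral_fine_partition_approx[OF M P integrable_exp_minus_dist[OF M], of 1]
      by (simp add: Zmu_def h_def)
  qed
  have "\<bar>W_inner M N - (\<Sum>i<m. Zmu M (p i) * measure N (A i))\<bar> \<le> d"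
    using integral_fine_partition_approx[OF N P integrable_Zmu[OF M N], of 1] Zmu_lipschitz[OF M]
    by (simp add: W_inner_def)
  moreover have "\<bar>(\<Sum>i<m. Zmu M (p i) * measure N (A i)) - (\<Sum>i<m. h (p i) * measure N (A i))\<bar> \<le> d"
  proof -
    have "\<bar>(\<Sum>i<m. Zmu M (p i) * measure N (A i)) - (\<Sum>i<m. h (p i) * measure N (A i))\<bar>
        \<le> (\<Sum>i<m. \<bar>Zmu M (p i) - h (p i)\<bar> * measure N (A i))"
      by (auto simp: abs_mult simp flip: sum_subtractf left_diff_distrib intro: order.trans[OF sum_abs])
    also have "\<dots> \<le> (\<Sum>i<m. d * measure N (A i))"
      by (intro sum_mono mult_right_mono Zmu_h) auto
    also have "\<dots> = d"
      using sum_measure_fine_partition[OF N P] by (simp flip: sum_distrib_left)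
    finally show ?thesis .
  qed
  moreover have "(\<Sum>i<m. h (p i) * measure N (A i))
      = (\<Sum>i<m. \<Sum>j<m. exp (- dist (p i) (p j)) * measure M (A j) * measure N (A i))"
    by (simp add: h_def sum_distrib_right)
  ultimately show ?thesis
    by linarith
qed

lemma two_W_inner_le:
  fixes X :: "'a::metric_space set" and f :: "'a \<Rightarrow> 'b::{real_inner,complete_space}"
  assumes X: "compact X" and f: "sqrt_isometric_embedding X f"
    and M: "M \<in> borel_prob_measures X" and N: "N \<in> borel_prob_measures X"
  shows "2 * W_inner M N \<le> W_inner M M + W_inner N N"
proof (rule field_le_epsilon)
  fix e :: real
  assume "0 < e"
  then obtain m p A where P: "fine_partition X (e / 8) m p A"
    using fine_partition_exists[OF X] by (metis divide_pos_pos zero_less_numeral)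
  define K where "K i j = exp (- dist (p i) (p j))" for i j
  define S where "S u v = (\<Sum>i<m. \<Sum>j<m. K i j * u j * v i)" for u v :: "nat \<Rightarrow> real"
  define a where "a i = measure M (A i)" for i
  define b where "b i = measure N (A i)" for i
  have approx: "\<bar>W_inner U V - S (\<lambda>j. measure U (A j)) (\<lambda>i. measure V (A i))\<bar> \<le> e / 4"
    if "U \<in> borel_prob_measures X" "V \<in> borel_prob_measures X" for U V
    using W_inner_fine_partition_approx[OF that P] by (simp add: S_def K_def)
  have "S a b = S b a"
    unfolding S_def K_def by (subst sum.swap) (simp add: dist_commute mult_ac)
  moreover have "0 \<le> S (\<lambda>i. a i - b i) (\<lambda>i. a i - b i)"
  proof -
    have "K i j = exp (- (norm (f (p i) - f (p j)))\<^sup>2)" if "i < m" "j < m" for i j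
      using f P that by (simp add: sqrt_isometric_embedding_def fine_partition_def K_def flip: dist_norm)
    then have "(\<Sum>i<m. \<Sum>j<m. (a i - b i) * (a j - b j) * exp (- (norm (f (p i) - f (p j)))\<^sup>2))
        = S (\<lambda>i. a i - b i) (\<lambda>i. a i - b i)"
      unfolding S_def by (intro sum.cong refl) (simp add: mult_ac)
    moreover have "0 \<le> (\<Sum>i<m. \<Sum>j<m. (a i - b i) * (a j - b j) * exp (- (norm (f (p i) - f (p j)))\<^sup>2))"
      using pos_semidef_gaussian[of m "\<lambda>i. f (p i)"] unfolding pos_semidef_def by (rule allE)
    ultimately show ?thesis
      by simp
  qed
  moreover have "S (\<lambda>i. a i - b i) (\<lambda>i. a i - b i) = S a a + S b b - S a b - S b a"
    by (simp add: S_def algebra_simps sum_subtractf sum.distrib)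
  ultimately show "2 * W_inner M N \<le> W_inner M M + W_inner N N + e"
    using approx[OF M N] approx[OF M M] approx[OF N N] unfolding a_def b_def abs_le_iff
    by linarith
qed

text \<open>\<open>point_mixture X t p M\<close> is the measure \<open>t \<delta>\<^sub>p + (1 - t) M\<close>.\<close>
definition point_mixture :: "'a::metric_space set \<Rightarrow> real \<Rightarrow> 'a \<Rightarrow> 'a measure \<Rightarrow> 'a measure" where
  "point_mixture X t p M =
     measure_pmf (bernoulli_pmf t) \<bind> (\<lambda>b. if b then return (restrict_space borel X) p else M)"

lemma
  fixes X :: "'a::metric_space set"
  assumes M: "M \<in> borel_prob_measures X" and p: "p \<in> X"
  shows point_mixture_in_borel_prob_measures: "point_mixture X t p M \<in> borel_prob_measures X"
    and integral_point_mixture: "0 \<le> t \<Longrightarrow> t \<le> 1 \<Longrightarrow> continuous_on X g \<Longrightarrow>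
      (\<And>y. y \<in> X \<Longrightarrow> \<bar>g y\<bar> \<le> B) \<Longrightarrow>
      integral\<^sup>L (point_mixture X t p M) g = t * g p + (1 - t) * integral\<^sup>L M g"
proof -
  define L where "L = restrict_space borel X"
  define N where "N b = (if b then return L p else M)" for b
  have mixture_eq: "point_mixture X t p M = measure_pmf (bernoulli_pmf t) \<bind> N"
    unfolding point_mixture_def N_def[abs_def] L_def by (rule refl)
  have space_L: "space L = X"
    by (simp add: L_def space_restrict_space)
  have N_sets: "sets (N b) = sets L" and N_prob: "prob_space (N b)" for b
    using borel_prob_measuresD[OF M] p space_L by (auto simp: N_def L_def intro: prob_space_return)
  have N_meas: "N \<in> measurable (measure_pmf (bernoulli_pmf t)) (subprob_algebra L)"
    using N_sets N_prob by (auto simp: space_subprob_algebra prob_space_imp_subprob_space)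
  have "sets (point_mixture X t p M) = sets L"
    unfolding mixture_eq by (rule sets_bind) (auto simp: N_sets)
  moreover have "prob_space (point_mixture X t p M)"
    unfolding mixture_eq
    by (rule prob_space.prob_space_bind[OF prob_space_measure_pmf _ N_meas]) (auto simp: N_prob)
  ultimately show "point_mixture X t p M \<in> borel_prob_measures X"
    by (simp add: borel_prob_measures_def L_def)
  assume t: "0 \<le> t" "t \<le> 1" and g: "continuous_on X g" "\<And>y. y \<in> X \<Longrightarrow> \<bar>g y\<bar> \<le> B"
  have g_meas: "g \<in> borel_measurable L"
    unfolding L_def by (rule borel_measurable_continuous_on_restrict[OF g(1)])
  have "integral\<^sup>L (point_mixture X t p M) g
      = (\<integral>b. integral\<^sup>L (N b) g \<partial>measure_pmf (bernoulli_pmf t))"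
    unfolding mixture_eq
    using g(2) space_L prob_space.emeasure_space_1[OF N_prob]
    by (intro integral_bind[OF g_meas _ N_meas, where B'=1] AE_I2 prob_space.finite_measure
        prob_space_measure_pmf) auto
  also have "\<dots> = t * g p + (1 - t) * integral\<^sup>L M g"
    using t p space_L g_meas by (simp add: N_def integral_return)
  finally show "integral\<^sup>L (point_mixture X t p M) g = t * g p + (1 - t) * integral\<^sup>L M g" .
qed

lemma W_inner_point_mixture:
  fixes X :: "'a::metric_space set"
  assumes M: "M \<in> borel_prob_measures X" and p: "p \<in> X" and t: "0 \<le> t" "t \<le> 1"
  shows "W_inner (point_mixture X t p M) (point_mixture X t p M)
    = t\<^sup>2 + 2 * t * (1 - t) * Zmu M p + (1 - t)\<^sup>2 * W_inner M M"
proof -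
  define Mt where "Mt = point_mixture X t p M"
  have Mt: "Mt \<in> borel_prob_measures X"
    unfolding Mt_def by (rule point_mixture_in_borel_prob_measures[OF M p])
  have Zmu_Mt: "Zmu Mt y = t * exp (- dist y p) + (1 - t) * Zmu M y" for y
  proof -
    have "continuous_on X (\<lambda>x. exp (- dist y x))"
      by (intro continuous_intros)
    then show ?thesis
      unfolding Zmu_def Mt_def by (rule integral_point_mixture[OF M p t, where B=1]) auto
  qed
  have "integral\<^sup>L M (\<lambda>y. exp (- dist y p)) = Zmu M p"
    by (simp add: Zmu_def dist_commute)
  then have integral_Zmu_Mt: "integral\<^sup>L M (Zmu Mt) = t * Zmu M p + (1 - t) * W_inner M M"
    unfolding Zmu_Mt W_inner_def
    using integrable_exp_minus_dist[OF M, of p] integrable_Zmu[OF M M]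
    by (simp add: dist_commute)
  have "W_inner Mt Mt = t * Zmu Mt p + (1 - t) * integral\<^sup>L M (Zmu Mt)"
    unfolding W_inner_def Mt_def
    using Zmu_nonneg[OF Mt] Zmu_le_one[OF Mt] continuous_on_Zmu[OF Mt]
    by (intro integral_point_mixture[OF M p t, where B=1]) (auto simp: Mt_def)
  also have "\<dots> = t * (t + (1 - t) * Zmu M p) + (1 - t) * (t * Zmu M p + (1 - t) * W_inner M M)"
    unfolding integral_Zmu_Mt Zmu_Mt by simp
  finally show ?thesis
    unfolding Mt_def by (simp add: power2_eq_square algebra_simps)
qed

lemma open_Int_in_sets:
  assumes "M \<in> borel_prob_measures X" "open U"
  shows "U \<inter> X \<in> sets M"
  using assms by (auto simp: borel_prob_measuresD(2) sets_restrict_space Int_commute)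

lemma AE_not_in_compact_disjoint_msupp:
  assumes M: "M \<in> borel_prob_measures X" and K: "compact K" "K \<subseteq> X" "K \<inter> msupp M = {}"
  shows "AE y in M. y \<notin> K"
proof -
  have "\<exists>U. open U \<and> x \<in> U \<and> emeasure M (U \<inter> X) = 0" if "x \<in> K" for x
  proof -
    have "x \<in> X" "x \<notin> msupp M"
      using K that by auto
    then show ?thesis
      using borel_prob_measuresD(3)[OF M] by (auto simp: msupp_def)
  qed
  then obtain U where U: "\<And>x. x \<in> K \<Longrightarrow> open (U x) \<and> x \<in> U x \<and> emeasure M (U x \<inter> X) = 0"
    by metis
  then have "\<And>x. x \<in> K \<Longrightarrow> open (U x)" "K \<subseteq> (\<Union>x\<in>K. U x)"
    by blast+
  then obtain F where F: "F \<subseteq> K" "finite F" "K \<subseteq> (\<Union>x\<in>F. U x)"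
    by (rule compactE_image[OF K(1)])
  have "AE y in M. \<forall>x\<in>F. y \<notin> U x \<inter> X"
  proof (rule AE_finite_allI[OF F(2)])
    fix x
    assume "x \<in> F"
    then have "U x \<inter> X \<in> null_sets M"
      using F U[of x] open_Int_in_sets[OF M] by (intro null_setsI) auto
    then show "AE y in M. y \<notin> U x \<inter> X"
      by (rule AE_not_in)
  qed
  then show ?thesis
    by (rule eventually_mono) (use F(3) K(2) in blast)
qed

lemma AE_eq_if_eq_on_msupp:
  fixes g :: "'a::metric_space \<Rightarrow> real"
  assumes X: "compact X" and M: "M \<in> borel_prob_measures X" and g: "continuous_on X g"
    and ge: "\<And>y. y \<in> X \<Longrightarrow> c \<le> g y" and eq: "\<And>x. x \<in> msupp M \<Longrightarrow> g x = c"
  shows "AE y in M. g y = c"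
proof -
  define S where "S n = X \<inter> g -` {c + 1 / Suc n..}" for n :: nat
  have pointwise: "g y = c" if "\<forall>n. y \<notin> S n" "y \<in> X" for y
  proof (rule ccontr)
    assume "g y \<noteq> c"
    then have "0 < g y - c"
      using ge[OF \<open>y \<in> X\<close>] by linarith
    then obtain n where "inverse (real (Suc n)) < g y - c"
      using reals_Archimedean by blast
    then have "y \<in> S n"
      using \<open>y \<in> X\<close> by (simp add: S_def inverse_eq_divide)
    then show False
      using that by blast
  qed
  have "AE y in M. y \<notin> S n" for n
  proof (rule AE_not_in_compact_disjoint_msupp[OF M])
    have "closed (S n)"
      unfolding S_def using g compact_imp_closed[OF X] by (intro continuous_closed_preimage) auto
    then show "compact (S n)"
      using compact_Int_closed[OF X, of "S n"] by (simp add: S_def Int_left_absorb)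
    show "S n \<subseteq> X"
      by (simp add: S_def)
    have "c < c + 1 / Suc n"
      by simp
    then show "S n \<inter> msupp M = {}"
      using eq by (force simp: S_def)
  qed
  then have "AE y in M. \<forall>n. y \<notin> S n"
    by (simp add: AE_all_countable)
  moreover have "AE y in M. y \<in> X"
    using AE_space[of M] unfolding borel_prob_measuresD(3)[OF M] .
  ultimately show ?thesis
    by eventually_elim (use pointwise in blast)
qed

lemma eq_on_msupp_if_integral_le_lower_bound:
  fixes g :: "'a::metric_space \<Rightarrow> real"
  assumes M: "M \<in> borel_prob_measures X" and g: "continuous_on X g" "integrable M g"
    and ge: "\<And>y. y \<in> X \<Longrightarrow> c \<le> g y" and le: "integral\<^sup>L M g \<le> c"
    and x: "x \<in> msupp M"
  shows "g x = c"
proof (rule ccontr)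
  interpret prob_space M
    using borel_prob_measuresD(1)[OF M] .
  note space_M = borel_prob_measuresD(3)[OF M]
  assume "g x \<noteq> c"
  moreover have "x \<in> X"
    using x space_M by (simp add: msupp_def)
  ultimately have "c < g x"
    using ge by force
  define e where "e = (g x - c) / 2"
  obtain U where U: "open U" "U \<inter> X = g -` {c + e<..} \<inter> X"
    using g(1) continuous_on_open_invariant[of X g] by (meson open_greaterThan)
  have "x \<in> U \<inter> X"
    unfolding U(2) using \<open>x \<in> X\<close> \<open>c < g x\<close> by (simp add: e_def field_simps)
  then have pos: "0 < measure M (U \<inter> X)"
    using x U(1) space_M by (simp add: msupp_def emeasure_eq_measure)
  have UX: "U \<inter> X \<in> sets M"
    by (rule open_Int_in_sets[OF M U(1)])
  have "c + e * measure M (U \<inter> X) = integral\<^sup>L M (\<lambda>y. c + e * indicator (U \<inter> X) y)"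
    using UX by (simp add: prob_space emeasure_eq_measure)
  also have "\<dots> \<le> integral\<^sup>L M g"
  proof (rule integral_mono[OF _ g(2)])
    show "integrable M (\<lambda>y. c + e * indicator (U \<inter> X) y)"
      using UX by (auto simp: emeasure_eq_measure)
    show "c + e * indicator (U \<inter> X) y \<le> g y" if "y \<in> space M" for y
      using ge[of y] U(2) that space_M by (auto simp: indicator_def)
  qed
  finally have "c + e * measure M (U \<inter> X) \<le> integral\<^sup>L M g" .
  moreover have "0 < e * measure M (U \<inter> X)"
    using pos \<open>c < g x\<close> by (simp add: e_def)
  ultimately show False
    using le by linarith
qed

lemma
  fixes X :: "'a::metric_space set"
  assumes X: "compact X" and N: "N \<in> borel_prob_measures X"
  shows W_inner_pos: "0 < W_inner N N"
    and inverse_W_inner_le_max_diversity: "1 / W_inner N N \<le> max_diversity X"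
proof -
  obtain D where D: "\<And>x y. x \<in> X \<Longrightarrow> y \<in> X \<Longrightarrow> dist x y \<le> D"
    using compact_imp_bounded[OF X] unfolding bounded_two_points by blast
  have lower: "exp (- D) \<le> W_inner L L" if "L \<in> borel_prob_measures X" for L
    using exp_diameter_le_W_inner[OF that that D] .
  show "0 < W_inner N N"
    by (rule less_le_trans[OF exp_gt_zero lower[OF N]])
  have "1 / W_inner L L \<le> exp D" if "L \<in> borel_prob_measures X" for L
    using le_imp_inverse_le[OF lower[OF that] exp_gt_zero] by (simp add: exp_minus inverse_eq_divide)
  then have "bdd_above ((\<lambda>L. 1 / W_inner L L) ` borel_prob_measures X)"
    by (intro bdd_aboveI2)
  then show "1 / W_inner N N \<le> max_diversity X"
    unfolding max_diversity_def by (rule cSUP_upper[OF N])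
qed

lemma W_inner_le_Zmu_if_diversity_maximizing:
  fixes X :: "'a::metric_space set"
  assumes X: "compact X" and max: "diversity_maximizing X M" and p: "p \<in> X"
  shows "W_inner M M \<le> Zmu M p"
proof (rule ccontr)
  have M: "M \<in> borel_prob_measures X"
    using max by (simp add: diversity_maximizing_def)
  define W where "W = W_inner M M"
  define Z where "Z = Zmu M p"
  assume "\<not> W_inner M M \<le> Zmu M p"
  then have "Z < W"
    by (simp add: W_def Z_def)
  text \<open>Moving the mass \<open>t\<close> to the point \<open>p\<close> changes the energy by
    \<open>2 t (Z - W) + O(t\<^sup>2)\<close>; the choice of \<open>t\<close> makes the total change
    \<open>t\<^sup>2 (W - 2 Z - 3) < 0\<close>.\<close>
  define t where "t = (W - Z) / 2"
  have "0 \<le> Z" "W \<le> 1"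
    using Zmu_nonneg[OF M] W_inner_le_one[OF M M] by (simp_all add: W_def Z_def)
  then have t: "0 < t" "t \<le> 1"
    using \<open>Z < W\<close> by (simp_all add: t_def)
  define Mt where "Mt = point_mixture X t p M"
  have Mt: "Mt \<in> borel_prob_measures X"
    unfolding Mt_def by (rule point_mixture_in_borel_prob_measures[OF M p])
  have "W_inner Mt Mt - W = t\<^sup>2 * (W - 2 * Z - 3)"
    using W_inner_point_mixture[OF M p less_imp_le[OF t(1)] t(2)]
    by (simp add: Mt_def W_def Z_def t_def power2_eq_square field_simps)
  also have "\<dots> < 0"
    using t \<open>0 \<le> Z\<close> \<open>W \<le> 1\<close> by (simp add: mult_pos_neg)
  finally have "W_inner Mt Mt < W" by simp
  moreover have "W \<le> W_inner Mt Mt"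
  proof -
    have "1 / W_inner Mt Mt \<le> 1 / W"
      using inverse_W_inner_le_max_diversity[OF X Mt] max by (simp add: diversity_maximizing_def W_def)
    then show ?thesis
      using W_inner_pos[OF X Mt] W_inner_pos[OF X M] by (simp add: W_def field_simps)
  qed
  ultimately show False
    by linarith
qed

lemma Zmu_eq_W_inner_on_msupp_if_diversity_maximizing:
  fixes X :: "'a::metric_space set"
  assumes X: "compact X" and max: "diversity_maximizing X M"
  shows "(\<forall>x\<in>msupp M. Zmu M x = W_inner M M) \<and> (\<forall>x\<in>X. W_inner M M \<le> Zmu M x)"
proof -
  have M: "M \<in> borel_prob_measures X"
    using max by (simp add: diversity_maximizing_def)
  have ge: "W_inner M M \<le> Zmu M x" if "x \<in> X" for x
    using W_inner_le_Zmu_if_diversity_maximizing[OF X max that] .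
  have "Zmu M x = W_inner M M" if "x \<in> msupp M" for x
    using eq_on_msupp_if_integral_le_lower_bound[OF M continuous_on_Zmu[OF M] integrable_Zmu[OF M M]
        ge _ that]
    by (simp add: W_inner_def)
  with ge show ?thesis
    by blast
qed

lemma diversity_maximizing_if_Zmu_const_on_msupp:
  fixes X :: "'a::metric_space set" and f :: "'a \<Rightarrow> 'b::{real_inner,complete_space}"
  assumes X: "compact X" and f: "sqrt_isometric_embedding X f" and M: "M \<in> borel_prob_measures X"
    and C: "0 < C" and eq: "\<And>x. x \<in> msupp M \<Longrightarrow> Zmu M x = C"
    and ge: "\<And>x. x \<in> X \<Longrightarrow> C \<le> Zmu M x"
  shows "diversity_maximizing X M \<and> max_diversity X = 1 / C"
proof -
  interpret prob_space M
    using borel_prob_measuresD(1)[OF M] .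
  have "AE y in M. Zmu M y = C"
    using AE_eq_if_eq_on_msupp[OF X M continuous_on_Zmu[OF M]] eq ge by blast
  then have W_eq: "W_inner M M = C"
    unfolding W_inner_def
    using integral_cong_AE[of "Zmu M" M "\<lambda>_. C"]
      borel_prob_measures_measurable[OF M continuous_on_Zmu[OF M]]
    by (simp add: prob_space)
  have energy_ge: "C \<le> W_inner N N" if N: "N \<in> borel_prob_measures X" for N
  proof -
    interpret N: prob_space N
      using borel_prob_measuresD(1)[OF N] .
    have "C \<le> W_inner M N"
      unfolding W_inner_def using integrable_Zmu[OF M N] ge borel_prob_measuresD(3)[OF N]
      by (intro N.integral_ge_const AE_I2) auto
    then show ?thesis
      using two_W_inner_le[OF X f M N] W_eq by linarith
  qed
  then have "max_diversity X = 1 / C"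
    unfolding max_diversity_def
  proof (intro cSup_eq_maximum)
    show "1 / C \<in> (\<lambda>N. 1 / W_inner N N) ` borel_prob_measures X"
      using M W_eq by force
    fix z
    assume "z \<in> (\<lambda>N. 1 / W_inner N N) ` borel_prob_measures X"
    then obtain N where N: "N \<in> borel_prob_measures X" and z: "z = 1 / W_inner N N"
      by blast
    show "z \<le> 1 / C"
      unfolding z using energy_ge[OF N] C by (intro divide_left_mono mult_pos_pos) auto
  qed
  then show ?thesis
    using M W_eq by (simp add: diversity_maximizing_def)
qed

theorem proposition2p4:
  fixes X :: "'a::metric_space set" and f :: "'a \<Rightarrow> 'b::{real_inner,complete_space}"
    and M :: "'a measure"
  assumes "compact X"
    and "sqrt_isometric_embedding X f"
    and "M \<in> borel_prob_measures X"
  shows "(diversity_maximizing X M \<longleftrightarrow>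
           (\<exists>C>0. (\<forall>x\<in>msupp M. Zmu M x = C) \<and> (\<forall>x\<in>X. Zmu M x \<ge> C)))
       \<and> (\<forall>C. C > 0 \<and> (\<forall>x\<in>msupp M. Zmu M x = C) \<and> (\<forall>x\<in>X. Zmu M x \<ge> C)
              \<longrightarrow> C = 1 / max_diversity X)"
proof -
  note sufficient = diversity_maximizing_if_Zmu_const_on_msupp[OF assms]
  show ?thesis
  proof (intro conjI allI impI iffI)
    assume "diversity_maximizing X M"
    then show "\<exists>C>0. (\<forall>x\<in>msupp M. Zmu M x = C) \<and> (\<forall>x\<in>X. Zmu M x \<ge> C)"
      using Zmu_eq_W_inner_on_msupp_if_diversity_maximizing[OF assms(1)] W_inner_pos[OF assms(1,3)]
      by blast
  next
    assume "\<exists>C>0. (\<forall>x\<in>msupp M. Zmu M x = C) \<and> (\<forall>x\<in>X. Zmu M x \<ge> C)"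
    then show "diversity_maximizing X M"
      using sufficient by blast
  next
    fix C
    assume "C > 0 \<and> (\<forall>x\<in>msupp M. Zmu M x = C) \<and> (\<forall>x\<in>X. Zmu M x \<ge> C)"
    then have "max_diversity X = 1 / C"
      using sufficient by blast
    then show "C = 1 / max_diversity X"
      by simp
  qed
qed

end
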